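(* Let $\mathcal{J}$ be an adapted almost tangent structure on $T^{*}M$, let $\rho$ be a $\mathcal{J}$-regular vector field, and let $\mathcal{N}$ be an arbitrary nonlinear connection on $T^*M$ with horizontal and vertical projectors $h,v$ (no relation between $\rho$ and $\mathcal{N}$ is assumed). Let $\nabla$ be the dynamical covariant derivative with respect to $\rho$ and $\mathcal{N}$. Then $$h\circ\mathcal{L}_\rho\circ\mathcal{J}=-h,\qquad \mathcal{J}\circ\mathcal{L}_\rho\circ v=-v,$$ $$\nabla\mathcal{J}=\mathcal{L}_\rho\mathcal{J}+h-v,$$ and in local coordinates $$\nabla\mathcal{J}=\Big(\rho(t_{ij})+t_{kj}\frac{\partial\xi^k}{\partial x^i}-t_{ik}\frac{\partial\chi_j}{\partial p_k}+2\mathcal{N}_{ij}\Big)dx^i\otimes\frac{\partial}{\partial p_j}.$$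
   Context: $M$ is a smooth $n$-manifold, $T^*M$ its cotangent bundle with local coordinates $(x^i,p_i)$; summation over repeated indices. $VT^*M$ is the vertical distribution spanned by $\frac{\partial}{\partial p_i}$. A nonlinear connection $\mathcal{N}$ is a distribution $HT^*M$ supplementary to $VT^*M$; locally it has adapted basis $\frac{\delta}{\delta x^i}=\frac{\partial}{\partial x^i}+\mathcal{N}_{ij}\frac{\partial}{\partial p_j}$ with dual forms $dx^i$, $\delta p_i=dp_i-\mathcal{N}_{ij}dx^j$; its horizontal and vertical projectors are $h=\frac{\delta}{\delta x^i}\otimes dx^i$, $v=\frac{\partial}{\partial p_i}\otimes\delta p_i$, and the connection is also identified with the $(1,1)$-tensor $\mathcal{N}=h-v$. An adapted almost tangent structure is a $(1,1)$-tensor field $\mathcal{J}$ of rank $n$ with $\mathcal{J}^2=0$ and $\operatorname{Im}\mathcal{J}=\operatorname{Ker}\mathcal{J}=VT^*M$; locally $\mathcal{J}=t_{ij}dx^i\otimes\frac{\partial}{\partial p_j}$, and $(t^{ij})$ denotes the inverse matrix, $t_{ij}t^{jk}=\delta_i^k$. A vector field $\rho=\xi^i(x,p)\frac{\partial}{\partial x^i}+\chi_i(x,p)\frac{\partial}{\partial p_i}$ is $\mathcal{J}$-regular if $\mathcal{J}[\rho,\mathcal{J}X]=-\mathcal{J}X$ for all vector fields $X$. $\mathcal{L}_\rho$ denotes the operator $X\mapsto[\rho,X]$ on vector fields, and compositions such as $h\circ\mathcal{L}_\rho\circ\mathcal{J}$ are compositions of operators on vector fields; $\mathcal{L}_\rho\mathcal{J}$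 is the $(1,1)$-tensor $\mathcal{L}_\rho\circ\mathcal{J}-\mathcal{J}\circ\mathcal{L}_\rho$. The dynamical covariant derivative with respect to $\rho$ and $\mathcal{N}$ is the tensor derivation $\nabla$ on $T^*M\setminus\{0\}$ (i.e. $\mathbb{R}$-linear, type preserving, satisfying the Leibniz rule for tensor products and commuting with contractions) determined by $\nabla f=\rho(f)$ for functions and $\nabla X=h[\rho,hX]+v[\rho,vX]$ for vector fields, i.e. $\nabla=h\circ\mathcal{L}_\rho\circ h+v\circ\mathcal{L}_\rho\circ v$; on a $(1,1)$-tensor $T$ it acts by $\nabla T=\nabla\circ T-T\circ\nabla$. *)

theory Defs
  imports "HOL-Analysis.Analysis"
begin

text \<open>Local model of a chart domain of the cotangent bundle: points are pairs
  (x, p) of coordinate vectors; tangent vectors at a point are pairs (a, b)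
  meaning a^i d/dx^i + b_i d/dp_i.\<close>

type_synonym 'n pt = "(real^'n) \<times> (real^'n)"

fun Ck_on :: "nat \<Rightarrow> 'a set \<Rightarrow> ('a::real_normed_vector \<Rightarrow> 'b::real_normed_vector) \<Rightarrow> bool" where
  "Ck_on 0 U f = continuous_on U f"
| "Ck_on (Suc k) U f =
     (f differentiable_on U \<and> (\<forall>v. Ck_on k U (\<lambda>z. frechet_derivative f (at z) v)))"

definition cinf_on :: "'a set \<Rightarrow> ('a::real_normed_vector \<Rightarrow> 'b::real_normed_vector) \<Rightarrow> bool" where
  "cinf_on U f \<longleftrightarrow> (\<forall>k. Ck_on k U f)"

definition vf :: "'n::finite pt set \<Rightarrow> ('n pt \<Rightarrow> 'n pt) \<Rightarrow> bool" where
  "vf U X \<longleftrightarrow> cinf_on U X"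

definition lie :: "('n::finite pt \<Rightarrow> 'n pt) \<Rightarrow> ('n pt \<Rightarrow> 'n pt) \<Rightarrow> 'n pt \<Rightarrow> 'n pt" where
  "lie X Y = (\<lambda>z. frechet_derivative Y (at z) (X z) - frechet_derivative X (at z) (Y z))"

text \<open>Action of a (1,1)-tensor field (pointwise linear map) on a vector field.\<close>
definition app :: "('n::finite pt \<Rightarrow> 'n pt \<Rightarrow> 'n pt) \<Rightarrow> ('n pt \<Rightarrow> 'n pt) \<Rightarrow> 'n pt \<Rightarrow> 'n pt" where
  "app T X = (\<lambda>z. T z (X z))"

definition Vert :: "'n::finite pt set" where
  "Vert = {w. fst w = 0}"

definition adapted_ats :: "'n::finite pt set \<Rightarrow> ('n pt \<Rightarrow> 'n pt \<Rightarrow> 'n pt) \<Rightarrow> bool" where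
  "adapted_ats U J \<longleftrightarrow>
     (\<forall>z\<in>U. linear (J z) \<and> (\<forall>w. J z (J z w) = 0) \<and>
             range (J z) = Vert \<and> {w. J z w = 0} = Vert)
     \<and> (\<forall>w. cinf_on U (\<lambda>z. J z w))"

text \<open>Components t_ij of J = t_ij dx^i (x) d/dp_j.\<close>
definition tcoef :: "('n::finite pt \<Rightarrow> 'n pt \<Rightarrow> 'n pt) \<Rightarrow> 'n pt \<Rightarrow> 'n \<Rightarrow> 'n \<Rightarrow> real" where
  "tcoef J z i j = snd (J z (axis i 1, 0)) $ j"

definition J_regular :: "'n::finite pt set \<Rightarrow> ('n pt \<Rightarrow> 'n pt \<Rightarrow> 'n pt) \<Rightarrow> ('n pt \<Rightarrow> 'n pt) \<Rightarrow> bool" where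
  "J_regular U J \<rho> \<longleftrightarrow>
     (\<forall>X. vf U X \<longrightarrow> (\<forall>z\<in>U. J z (lie \<rho> (app J X) z) = - J z (X z)))"

text \<open>Nonlinear connection, given by its smooth coefficients N_ij
  (delta/delta x^i = d/dx^i + N_ij d/dp_j).\<close>
definition nonlin_conn :: "'n::finite pt set \<Rightarrow> ('n pt \<Rightarrow> real^'n^'n) \<Rightarrow> bool" where
  "nonlin_conn U N \<longleftrightarrow> (\<forall>i j. cinf_on U (\<lambda>z. N z $ i $ j))"

definition hproj :: "('n::finite pt \<Rightarrow> real^'n^'n) \<Rightarrow> 'n pt \<Rightarrow> 'n pt \<Rightarrow> 'n pt" where
  "hproj N z w = (fst w, \<chi> j. \<Sum>i\<in>UNIV. N z $ i $ j * fst w $ i)"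

text \<open>Vertical projector v = d/dp_j (x) delta p_j, delta p_j = dp_j - N_ij dx^i.\<close>
definition vproj :: "('n::finite pt \<Rightarrow> real^'n^'n) \<Rightarrow> 'n pt \<Rightarrow> 'n pt \<Rightarrow> 'n pt" where
  "vproj N z w = (0, \<chi> j. snd w $ j - (\<Sum>i\<in>UNIV. N z $ i $ j * fst w $ i))"

definition dyn_nabla :: "('n::finite pt \<Rightarrow> 'n pt) \<Rightarrow> ('n pt \<Rightarrow> real^'n^'n) \<Rightarrow> ('n pt \<Rightarrow> 'n pt) \<Rightarrow> 'n pt \<Rightarrow> 'n pt" where
  "dyn_nabla \<rho> N X = (\<lambda>z. hproj N z (lie \<rho> (app (hproj N) X) z) + vproj N z (lie \<rho> (app (vproj N) X) z))"

definition dyn_nablaT :: "('n::finite pt \<Rightarrow> 'n pt) \<Rightarrow> ('n pt \<Rightarrow> real^'n^'n) \<Rightarrow> ('n pt \<Rightarrow> 'n pt \<Rightarrow> 'n pt) \<Rightarrow> ('n pt \<Rightarrow> 'n pt) \<Rightarrow> 'n pt \<Rightarrow> 'n pt" where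
  "dyn_nablaT \<rho> N T X = (\<lambda>z. dyn_nabla \<rho> N (app T X) z - T z (dyn_nabla \<rho> N X z))"

definition lieT :: "('n::finite pt \<Rightarrow> 'n pt) \<Rightarrow> ('n pt \<Rightarrow> 'n pt \<Rightarrow> 'n pt) \<Rightarrow> ('n pt \<Rightarrow> 'n pt) \<Rightarrow> 'n pt \<Rightarrow> 'n pt" where
  "lieT \<rho> T X = (\<lambda>z. lie \<rho> (app T X) z - T z (lie \<rho> X z))"

end

theory Submission
  imports Defs
begin

text \<open>Since \<open>ker J = im J\<close> is the vertical distribution, regularity \<open>J[\<rho>, JX] = -JX\<close> says that
  \<open>[\<rho>, JX]\<close> and \<open>-X\<close> have the same horizontal part, which is the identity for \<open>h\<close>.
  Applied to constant fields it shows that the matrix \<open>\<partial>\<xi>\<^sup>i/\<partial>p\<^sub>k\<close> inverts \<open>(t\<^sub>i\<^sub>k)\<close>, and hence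
  \<open>J[\<rho>, Y] = -Y\<close> for every vertical field \<open>Y\<close>, in particular for \<open>Y = vX\<close>.
  Because \<open>hJ = 0\<close>, \<open>vJ = J\<close>, \<open>Jh = J\<close> and \<open>Jv = 0\<close>, the covariant derivative reduces to
  \<open>(\<nabla>J)X = v[\<rho>, JX] - J[\<rho>, hX]\<close>, which rearranges to \<open>\<L>\<^sub>\<rho>J + h - v\<close>. Expanding both
  brackets in coordinates, \<open>v\<close> contributes \<open>\<N>a\<close> because \<open>[\<rho>, JX]\<close> has horizontal part \<open>-a\<close>
  (\<open>a\<close> the \<open>dx\<close>-components of \<open>X\<close>),
  and the inverse relation turns the term \<open>(\<partial>\<xi>/\<partial>p)(\<N>a)\<close> of \<open>[\<rho>, hX]\<close> into another
  \<open>\<N>a\<close> under \<open>J\<close>; together they give the coefficient \<open>2\<N>\<^sub>i\<^sub>j\<close>.\<close>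

subsection \<open>Calculus in the chart\<close>

abbreviation vf_apply :: "('n::finite pt \<Rightarrow> 'n pt) \<Rightarrow> ('n pt \<Rightarrow> real) \<Rightarrow> 'n pt \<Rightarrow> real" where
  "vf_apply \<rho> f z \<equiv> frechet_derivative f (at z) (\<rho> z)"

abbreviation partial_x :: "('n::finite pt \<Rightarrow> real) \<Rightarrow> 'n pt \<Rightarrow> 'n \<Rightarrow> real" where
  "partial_x f z i \<equiv> frechet_derivative f (at z) (axis i 1, 0)"

abbreviation partial_p :: "('n::finite pt \<Rightarrow> real) \<Rightarrow> 'n pt \<Rightarrow> 'n \<Rightarrow> real" where
  "partial_p f z i \<equiv> frechet_derivative f (at z) (0, axis i 1)"

lemma frechet_derivative_bounded_linear_compose:
  assumes "bounded_linear L" "f differentiable at z"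
  shows "frechet_derivative (\<lambda>y. L (f y)) (at z) v = L (frechet_derivative f (at z) v)"
proof -
  have "((\<lambda>y. L (f y)) has_derivative (\<lambda>v. L (frechet_derivative f (at z) v))) (at z)"
    using bounded_linear.has_derivative[OF assms(1)] assms(2) frechet_derivative_works by blast
  then show ?thesis
    by (metis frechet_derivative_at)
qed

lemma differentiable_bounded_linear_compose:
  "bounded_linear L \<Longrightarrow> f differentiable at z \<Longrightarrow> (\<lambda>y. L (f y)) differentiable at z"
  unfolding differentiable_def using bounded_linear.has_derivative by blast

lemma bounded_linear_fst_component: "bounded_linear (\<lambda>w::'n::finite pt. fst w $ i)"
  by (rule bounded_linear_compose[OF bounded_linear_vec_nth bounded_linear_fst])

lemma bounded_linear_snd_component: "bounded_linear (\<lambda>w::'n::finite pt. snd w $ i)"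
  by (rule bounded_linear_compose[OF bounded_linear_vec_nth bounded_linear_snd])

lemma frechet_derivative_fst_component:
  fixes f :: "'a::real_normed_vector \<Rightarrow> 'n::finite pt"
  shows "f differentiable at z \<Longrightarrow>
    frechet_derivative (\<lambda>y. fst (f y) $ i) (at z) v = fst (frechet_derivative f (at z) v) $ i"
  by (rule frechet_derivative_bounded_linear_compose[OF bounded_linear_fst_component])

lemma frechet_derivative_snd_component:
  fixes f :: "'a::real_normed_vector \<Rightarrow> 'n::finite pt"
  shows "f differentiable at z \<Longrightarrow>
    frechet_derivative (\<lambda>y. snd (f y) $ i) (at z) v = snd (frechet_derivative f (at z) v) $ i"
  by (rule frechet_derivative_bounded_linear_compose[OF bounded_linear_snd_component])

lemma frechet_derivative_sum_mult:
  fixes f g :: "'i \<Rightarrow> 'a::real_normed_vector \<Rightarrow> real"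
  assumes "\<And>i. f i differentiable at z" "\<And>i. g i differentiable at z"
  shows "frechet_derivative (\<lambda>y. \<Sum>i\<in>I. f i y * g i y) (at z) v =
    (\<Sum>i\<in>I. frechet_derivative (f i) (at z) v * g i z + f i z * frechet_derivative (g i) (at z) v)"
proof -
  have "((\<lambda>y. \<Sum>i\<in>I. f i y * g i y) has_derivative
      (\<lambda>v. \<Sum>i\<in>I. f i z * frechet_derivative (g i) (at z) v + frechet_derivative (f i) (at z) v * g i z)) (at z)"
    using assms by (intro has_derivative_sum has_derivative_mult) (auto simp: frechet_derivative_works)
  then have "frechet_derivative (\<lambda>y. \<Sum>i\<in>I. f i y * g i y) (at z) =
      (\<lambda>v. \<Sum>i\<in>I. f i z * frechet_derivative (g i) (at z) v + frechet_derivative (f i) (at z) v * g i z)"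
    by (rule frechet_derivative_at[symmetric])
  then show ?thesis
    by (simp add: add.commute)
qed

lemma differentiable_vec_lambda:
  assumes "\<And>j. (\<lambda>y. f j y) differentiable at z"
  shows "(\<lambda>y. (\<chi> j. f j y) :: real^'n::finite) differentiable at z"
proof -
  have "(\<lambda>y. \<Sum>j\<in>UNIV. f j y *\<^sub>R axis j (1::real)) differentiable at z"
    using assms by (intro differentiable_sum differentiable_scaleR) auto
  moreover have "(\<lambda>y. \<Sum>j\<in>UNIV. f j y *\<^sub>R axis j (1::real)) = (\<lambda>y. \<chi> j. f j y)"
    using basis_expansion[of "\<chi> j. f j _"] by (simp add: scalar_mult_eq_scaleR)
  ultimately show ?thesis by simp
qed

lemma frechet_derivative_fst_eq_0:
  assumes "f differentiable at z" "open U" "z \<in> U" "\<And>y. y \<in> U \<Longrightarrow> fst (f y) = 0"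
  shows "fst (frechet_derivative f (at z) v) = 0"
proof -
  have "fst (frechet_derivative f (at z) v) = frechet_derivative (\<lambda>y. fst (f y)) (at z) v"
    by (rule frechet_derivative_bounded_linear_compose[OF bounded_linear_fst assms(1), symmetric])
  also have "frechet_derivative (\<lambda>y. fst (f y)) (at z) = frechet_derivative (\<lambda>y. 0) (at z)"
    by (rule frechet_derivative_transform_within_open[OF _ assms(2,3), symmetric]) (simp_all add: assms(4))
  finally show ?thesis by simp
qed

lemma differentiable_transform_within_open:
  assumes "f differentiable at z" "open U" "z \<in> U" "\<And>y. y \<in> U \<Longrightarrow> f y = g y"
  shows "g differentiable at z"
  using assms has_derivative_transform_within_open[of f _ z UNIV U g]
  unfolding differentiable_def by blast

lemma linear_pair_expansion:
  fixes D :: "'n::finite pt \<Rightarrow> 'b::real_vector"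
  assumes "linear D"
  shows "D (a, b) = (\<Sum>i\<in>UNIV. a $ i *\<^sub>R D (axis i 1, 0)) + (\<Sum>i\<in>UNIV. b $ i *\<^sub>R D (0, axis i 1))"
proof -
  have expansion: "(a, b) = (\<Sum>i\<in>UNIV. a $ i *\<^sub>R (axis i 1, 0)) + (\<Sum>i\<in>UNIV. b $ i *\<^sub>R (0, axis i 1))"
    using basis_expansion[of a] basis_expansion[of b]
    by (simp add: prod_eq_iff fst_sum snd_sum scalar_mult_eq_scaleR)
  show ?thesis
    by (subst expansion) (simp only: linear_add[OF assms] linear_sum[OF assms] linear_scale[OF assms])
qed

lemma frechet_derivative_pair_components:
  fixes f :: "'n::finite pt \<Rightarrow> 'm::finite pt"
  assumes "f differentiable at z"
  shows "fst (frechet_derivative f (at z) (a, b)) $ i =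
      (\<Sum>l\<in>UNIV. a $ l * partial_x (\<lambda>y. fst (f y) $ i) z l)
      + (\<Sum>l\<in>UNIV. b $ l * partial_p (\<lambda>y. fst (f y) $ i) z l)"
    and "snd (frechet_derivative f (at z) (a, b)) $ i =
      (\<Sum>l\<in>UNIV. a $ l * partial_x (\<lambda>y. snd (f y) $ i) z l)
      + (\<Sum>l\<in>UNIV. b $ l * partial_p (\<lambda>y. snd (f y) $ i) z l)"
  using linear_pair_expansion[OF linear_frechet_derivative[OF assms], of a b]
  by (simp_all add: frechet_derivative_fst_component[OF assms] frechet_derivative_snd_component[OF assms]
      fst_sum snd_sum sum_component)

lemma lie_transform_within_open:
  assumes "Y' differentiable at z" "open U" "z \<in> U" "\<And>y. y \<in> U \<Longrightarrow> Y y = Y' y"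
  shows "lie \<rho> Y z = lie \<rho> Y' z"
proof -
  have "frechet_derivative Y' (at z) = frechet_derivative Y (at z)"
    by (rule frechet_derivative_transform_within_open[OF assms(1-3)]) (simp add: assms(4))
  then show ?thesis
    unfolding lie_def using assms(3,4) by simp
qed

lemma lie_zero_right: "\<rho> differentiable at z \<Longrightarrow> lie \<rho> (\<lambda>y. 0) z = 0"
  unfolding lie_def using linear_0[OF linear_frechet_derivative] by simp

lemma lie_add_right:
  assumes "\<rho> differentiable at z" "Y differentiable at z" "Y' differentiable at z"
  shows "lie \<rho> (\<lambda>y. Y y + Y' y) z = lie \<rho> Y z + lie \<rho> Y' z"
proof -
  have "((\<lambda>y. Y y + Y' y) has_derivative
      (\<lambda>v. frechet_derivative Y (at z) v + frechet_derivative Y' (at z) v)) (at z)"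
    using assms(2,3) by (intro has_derivative_add) (simp_all add: frechet_derivative_works)
  then have "frechet_derivative (\<lambda>y. Y y + Y' y) (at z) =
      (\<lambda>v. frechet_derivative Y (at z) v + frechet_derivative Y' (at z) v)"
    by (rule frechet_derivative_at[symmetric])
  then show ?thesis
    unfolding lie_def using linear_add[OF linear_frechet_derivative[OF assms(1)]] by simp
qed

subsection \<open>Adapted almost tangent structures\<close>

lemma adapted_atsD:
  assumes "adapted_ats U J" "z \<in> U"
  shows "linear (J z)" "range (J z) = Vert" "{w. J z w = 0} = Vert"
  using assms unfolding adapted_ats_def by auto

lemma adapted_ats_fst:
  assumes "adapted_ats U J" "z \<in> U"
  shows "fst (J z w) = 0"
proof -
  have "J z w \<in> Vert" using adapted_atsD(2)[OF assms] by blast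
  then show ?thesis by (simp add: Vert_def)
qed

lemma adapted_ats_eq_0_iff:
  assumes "adapted_ats U J" "z \<in> U"
  shows "J z w = 0 \<longleftrightarrow> fst w = 0"
  using adapted_atsD(3)[OF assms] by (auto simp: Vert_def)

lemma adapted_ats_onto_vertical:
  assumes "adapted_ats U J" "z \<in> U"
  obtains w where "J z w = (0, b)"
proof -
  have "(0, b) \<in> range (J z)" using adapted_atsD(2)[OF assms] by (simp add: Vert_def)
  then show ?thesis using that by (metis rangeE)
qed

lemma adapted_ats_horizontal:
  assumes "adapted_ats U J" "z \<in> U"
  shows "J z w = J z (fst w, 0)"
proof -
  have "J z w = J z (fst w, 0) + J z (0, snd w)"
    using linear_add[OF adapted_atsD(1)[OF assms], of "(fst w, 0)" "(0, snd w)"] by simp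
  then show ?thesis using adapted_ats_eq_0_iff[OF assms, of "(0, snd w)"] by simp
qed

lemma adapted_ats_horizontal_eq_iff:
  assumes "adapted_ats U J" "z \<in> U"
  shows "J z v = J z w \<longleftrightarrow> fst v = fst w"
proof -
  have "J z (v - w) = J z v - J z w"
    by (rule linear_diff[OF adapted_atsD(1)[OF assms]])
  then have "J z v = J z w \<longleftrightarrow> J z (v - w) = 0"
    by simp
  then show ?thesis using adapted_ats_eq_0_iff[OF assms] by simp
qed

lemma adapted_ats_coords:
  assumes "adapted_ats U J" "z \<in> U"
  shows "J z w = (0, \<chi> j. \<Sum>i\<in>UNIV. fst w $ i * tcoef J z i j)"
proof -
  have "J z w = J z (fst w, 0)"
    by (rule adapted_ats_horizontal[OF assms])
  also have "\<dots> = (\<Sum>i\<in>UNIV. fst w $ i *\<^sub>R J z (axis i 1, 0))"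
    using linear_pair_expansion[OF adapted_atsD(1)[OF assms], of "fst w" 0] by simp
  finally show ?thesis
    using adapted_ats_fst[OF assms]
    by (simp add: prod_eq_iff fst_sum snd_sum vec_eq_iff sum_component tcoef_def)
qed

lemma hproj_plus_vproj: "hproj N z w + vproj N z w = w"
  by (simp add: hproj_def vproj_def prod_eq_iff vec_eq_iff)

lemma hproj_adapted_ats:
  assumes "adapted_ats U J" "z \<in> U"
  shows "hproj N z (J z w) = 0"
  using adapted_ats_fst[OF assms] by (simp add: hproj_def prod_eq_iff vec_eq_iff)

lemma vproj_adapted_ats:
  assumes "adapted_ats U J" "z \<in> U"
  shows "vproj N z (J z w) = J z w"
  using adapted_ats_fst[OF assms] by (simp add: vproj_def prod_eq_iff vec_eq_iff)

lemma adapted_ats_hproj: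
  assumes "adapted_ats U J" "z \<in> U"
  shows "J z (hproj N z w) = J z w"
  using adapted_ats_horizontal_eq_iff[OF assms] by (simp add: hproj_def)

lemma adapted_ats_vproj:
  assumes "adapted_ats U J" "z \<in> U"
  shows "J z (vproj N z w) = 0"
  using adapted_ats_eq_0_iff[OF assms] by (simp add: vproj_def)

lemma Ck_on_const: "Ck_on k U (\<lambda>z. c)"
  by (induction k arbitrary: c) simp_all

lemma cinf_on_const: "cinf_on U (\<lambda>z. c)"
  unfolding cinf_on_def by (simp add: Ck_on_const)

lemma cinf_on_differentiable_at:
  assumes "cinf_on U f" "open U" "z \<in> U"
  shows "f differentiable at z"
proof -
  have "Ck_on (Suc 0) U f" using assms(1) unfolding cinf_on_def by blast
  then show ?thesis using assms(2,3) by (simp add: differentiable_on_eq_differentiable_at)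
qed

lemma vf_differentiable_at: "open U \<Longrightarrow> vf U X \<Longrightarrow> z \<in> U \<Longrightarrow> X differentiable at z"
  unfolding vf_def by (rule cinf_on_differentiable_at)

lemma vf_fst_differentiable_at:
  "open U \<Longrightarrow> vf U X \<Longrightarrow> z \<in> U \<Longrightarrow> (\<lambda>y. fst (X y) $ i) differentiable at z"
  by (rule differentiable_bounded_linear_compose[OF bounded_linear_fst_component vf_differentiable_at])

lemma vf_snd_differentiable_at:
  "open U \<Longrightarrow> vf U X \<Longrightarrow> z \<in> U \<Longrightarrow> (\<lambda>y. snd (X y) $ i) differentiable at z"
  by (rule differentiable_bounded_linear_compose[OF bounded_linear_snd_component vf_differentiable_at])

lemma nonlin_conn_differentiable_at:
  "open U \<Longrightarrow> nonlin_conn U N \<Longrightarrow> z \<in> U \<Longrightarrow> (\<lambda>y. N y $ i $ j) differentiable at z"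
  unfolding nonlin_conn_def using cinf_on_differentiable_at by blast

lemma tcoef_differentiable_at:
  assumes "open U" "adapted_ats U J" "z \<in> U"
  shows "(\<lambda>y. tcoef J y i j) differentiable at z"
proof -
  have "(\<lambda>y. J y (axis i 1, 0)) differentiable at z"
    using assms cinf_on_differentiable_at unfolding adapted_ats_def by blast
  then show ?thesis
    unfolding tcoef_def by (rule differentiable_bounded_linear_compose[OF bounded_linear_snd_component])
qed

lemma hproj_vf_differentiable_at:
  assumes "open U" "nonlin_conn U N" "vf U X" "z \<in> U"
  shows "app (hproj N) X differentiable at z"
  unfolding app_def hproj_def
  using nonlin_conn_differentiable_at[OF assms(1,2,4)] vf_fst_differentiable_at[OF assms(1,3,4)]
  by (intro differentiable_Pair differentiable_vec_lambda
      differentiable_bounded_linear_compose[OF bounded_linear_fst vf_differentiable_at[OF assms(1,3,4)]])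
    simp_all

lemma vproj_vf_differentiable_at:
  assumes "open U" "nonlin_conn U N" "vf U X" "z \<in> U"
  shows "app (vproj N) X differentiable at z"
  unfolding app_def vproj_def
  using nonlin_conn_differentiable_at[OF assms(1,2,4)] vf_fst_differentiable_at[OF assms(1,3,4)]
    vf_snd_differentiable_at[OF assms(1,3,4)]
  by (intro differentiable_Pair differentiable_vec_lambda) simp_all

lemma adapted_ats_vf_coords:
  assumes "adapted_ats U J" "y \<in> U"
  shows "app J X y = (0, \<chi> j. \<Sum>i\<in>UNIV. fst (X y) $ i * tcoef J y i j)"
  unfolding app_def by (rule adapted_ats_coords[OF assms])

lemma adapted_ats_vf_differentiable_at:
  fixes J :: "'n::finite pt \<Rightarrow> 'n pt \<Rightarrow> 'n pt"
  assumes "open U" "adapted_ats U J" "vf U X" "z \<in> U"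
  shows "app J X differentiable at z"
proof -
  have "(\<lambda>y. ((0::real^'n), \<chi> j. \<Sum>i\<in>UNIV. fst (X y) $ i * tcoef J y i j)) differentiable at z"
    using tcoef_differentiable_at[OF assms(1,2,4)] vf_fst_differentiable_at[OF assms(1,3,4)]
    by (intro differentiable_Pair differentiable_vec_lambda) simp_all
  then show ?thesis
    by (rule differentiable_transform_within_open[OF _ assms(1,4)])
      (simp add: adapted_ats_vf_coords[OF assms(2)])
qed

subsection \<open>Regular vector fields\<close>

lemma J_regular_fst_lie:
  assumes "adapted_ats U J" "J_regular U J \<rho>" "vf U X" "z \<in> U"
  shows "fst (lie \<rho> (app J X) z) = - fst (X z)"
proof -
  have "J z (lie \<rho> (app J X) z) = - J z (X z)"
    using assms(2-4) unfolding J_regular_def by blast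
  also have "\<dots> = J z (- X z)"
    by (rule linear_neg[OF adapted_atsD(1)[OF assms(1,4)], symmetric])
  finally have "J z (lie \<rho> (app J X) z) = J z (- X z)" .
  then show ?thesis
    using adapted_ats_horizontal_eq_iff[OF assms(1,4)] by simp
qed

lemma J_regular_fst_deriv_J:
  fixes J :: "'n::finite pt \<Rightarrow> 'n pt \<Rightarrow> 'n pt"
  assumes "open U" "adapted_ats U J" "J_regular U J \<rho>" "z \<in> U"
  shows "fst (frechet_derivative \<rho> (at z) (J z (a, 0))) = a"
proof -
  define X :: "'n pt \<Rightarrow> 'n pt" where "X = (\<lambda>y. (a, 0))"
  have vf_X: "vf U X"
    unfolding vf_def X_def by (rule cinf_on_const)
  have "fst (frechet_derivative (app J X) (at z) (\<rho> z)) = 0"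
    using adapted_ats_vf_differentiable_at[OF assms(1,2) vf_X assms(4)] assms(1,4)
    by (rule frechet_derivative_fst_eq_0) (simp add: app_def adapted_ats_fst[OF assms(2)])
  then have "fst (lie \<rho> (app J X) z) = - fst (frechet_derivative \<rho> (at z) (J z (a, 0)))"
    by (simp add: lie_def app_def X_def)
  then show ?thesis
    using J_regular_fst_lie[OF assms(2,3) vf_X assms(4)] by (simp add: X_def)
qed

lemma J_regular_J_deriv_vertical:
  assumes "open U" "adapted_ats U J" "J_regular U J \<rho>" "z \<in> U"
  shows "J z (fst (frechet_derivative \<rho> (at z) (0, b)), 0) = (0, b)"
proof -
  obtain w where w: "J z w = (0, b)"
    using adapted_ats_onto_vertical[OF assms(2,4)] .
  then have "J z (fst w, 0) = (0, b)"
    using adapted_ats_horizontal[OF assms(2,4), of w] by simp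
  moreover have "fst (frechet_derivative \<rho> (at z) (J z (fst w, 0))) = fst w"
    by (rule J_regular_fst_deriv_J[OF assms])
  ultimately show ?thesis by simp
qed

lemma J_regular_J_lie_vertical:
  assumes "open U" "adapted_ats U J" "J_regular U J \<rho>" "z \<in> U"
    and "Y differentiable at z" "\<And>y. y \<in> U \<Longrightarrow> fst (Y y) = 0"
  shows "J z (lie \<rho> Y z) = - Y z"
proof -
  define s where "s = snd (Y z)"
  have Yz: "Y z = (0, s)"
    using assms(4,6) unfolding s_def by (simp add: prod_eq_iff)
  have "fst (frechet_derivative Y (at z) (\<rho> z)) = 0"
    by (rule frechet_derivative_fst_eq_0[OF assms(5,1,4,6)])
  then have "fst (lie \<rho> Y z) = fst (- (fst (frechet_derivative \<rho> (at z) (0, s)), 0))"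
    by (simp add: lie_def Yz)
  then have "J z (lie \<rho> Y z) = J z (- (fst (frechet_derivative \<rho> (at z) (0, s)), 0))"
    using adapted_ats_horizontal_eq_iff[OF assms(2,4)] by blast
  also have "\<dots> = - J z (fst (frechet_derivative \<rho> (at z) (0, s)), 0)"
    by (rule linear_neg[OF adapted_atsD(1)[OF assms(2,4)]])
  also have "\<dots> = - (0, s)"
    by (simp only: J_regular_J_deriv_vertical[OF assms(1-4)])
  finally show ?thesis using Yz by simp
qed

subsection \<open>The dynamical covariant derivative of \<open>J\<close>\<close>

lemma sum_regroup_dyn_covariant_coords:
  fixes Da Dt a t Dchi Nn :: "'i \<Rightarrow> real" and T Xi :: "'i \<Rightarrow> 'i \<Rightarrow> real"
  shows "(\<Sum>i\<in>I. Da i * t i + a i * Dt i) - (\<Sum>k\<in>I. (\<Sum>i\<in>I. a i * T i k) * Dchi k)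
      + (\<Sum>i\<in>I. Nn i * a i) - ((\<Sum>i\<in>I. (Da i - (\<Sum>l\<in>I. a l * Xi i l)) * t i) - (\<Sum>i\<in>I. Nn i * a i))
    = (\<Sum>i\<in>I. (Dt i + (\<Sum>k\<in>I. t k * Xi k i) - (\<Sum>k\<in>I. T i k * Dchi k) + 2 * Nn i) * a i)"
proof -
  have "(\<Sum>i\<in>I. (\<Sum>l\<in>I. a l * Xi i l) * t i) = (\<Sum>i\<in>I. (\<Sum>k\<in>I. t k * Xi k i) * a i)"
    unfolding sum_distrib_right by (subst sum.swap) (simp add: mult_ac)
  moreover have "(\<Sum>k\<in>I. (\<Sum>i\<in>I. a i * T i k) * Dchi k) = (\<Sum>i\<in>I. (\<Sum>k\<in>I. T i k * Dchi k) * a i)"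
    by (simp add: sum_distrib_right sum_distrib_left mult_ac) (rule sum.swap)
  ultimately show ?thesis
    by (simp add: algebra_simps sum.distrib sum_subtractf sum_distrib_left)
qed

context
  fixes U :: "'n::finite pt set" and J :: "'n pt \<Rightarrow> 'n pt \<Rightarrow> 'n pt"
    and \<rho> :: "'n pt \<Rightarrow> 'n pt" and N :: "'n pt \<Rightarrow> real^'n^'n"
  assumes U: "open U" and J: "adapted_ats U J" and \<rho>: "vf U \<rho>" and regular: "J_regular U J \<rho>"
    and N: "nonlin_conn U N"
begin

lemma hproj_lie_J:
  "vf U X \<Longrightarrow> z \<in> U \<Longrightarrow> hproj N z (lie \<rho> (app J X) z) = - hproj N z (X z)"
  using J_regular_fst_lie[OF J regular] by (simp add: hproj_def prod_eq_iff vec_eq_iff sum_negf)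

lemma J_lie_vproj:
  assumes "vf U X" "z \<in> U"
  shows "J z (lie \<rho> (app (vproj N) X) z) = - vproj N z (X z)"
  using J_regular_J_lie_vertical[OF U J regular assms(2) vproj_vf_differentiable_at[OF U N assms]]
  by (simp add: app_def vproj_def)

lemma dyn_nabla_J:
  assumes "vf U X" "z \<in> U"
  shows "dyn_nabla \<rho> N (app J X) z = vproj N z (lie \<rho> (app J X) z)"
proof -
  have \<rho>_diff: "\<rho> differentiable at z"
    by (rule vf_differentiable_at[OF U \<rho> assms(2)])
  have JX_diff: "app J X differentiable at z"
    by (rule adapted_ats_vf_differentiable_at[OF U J assms])
  have "lie \<rho> (app (hproj N) (app J X)) z = lie \<rho> (\<lambda>y. 0) z"
    by (rule lie_transform_within_open[OF differentiable_const U assms(2)])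
      (simp add: app_def hproj_adapted_ats[OF J])
  moreover have "lie \<rho> (app (vproj N) (app J X)) z = lie \<rho> (app J X) z"
    by (rule lie_transform_within_open[OF JX_diff U assms(2)])
      (simp add: app_def vproj_adapted_ats[OF J])
  moreover have "hproj N z 0 = 0"
    by (simp add: hproj_def prod_eq_iff vec_eq_iff)
  ultimately show ?thesis
    unfolding dyn_nabla_def by (simp add: lie_zero_right[OF \<rho>_diff])
qed

lemma J_dyn_nabla:
  "z \<in> U \<Longrightarrow> J z (dyn_nabla \<rho> N X z) = J z (lie \<rho> (app (hproj N) X) z)"
  unfolding dyn_nabla_def
  by (simp add: linear_add[OF adapted_atsD(1)[OF J]] adapted_ats_hproj[OF J] adapted_ats_vproj[OF J])

lemma lie_hproj_plus_lie_vproj: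
  assumes "vf U X" "z \<in> U"
  shows "lie \<rho> X z = lie \<rho> (app (hproj N) X) z + lie \<rho> (app (vproj N) X) z"
proof -
  have "X = (\<lambda>y. app (hproj N) X y + app (vproj N) X y)"
    by (simp add: app_def hproj_plus_vproj)
  then show ?thesis
    using lie_add_right[OF vf_differentiable_at[OF U \<rho> assms(2)]
        hproj_vf_differentiable_at[OF U N assms] vproj_vf_differentiable_at[OF U N assms]]
    by metis
qed

lemma dyn_nablaT_J:
  assumes "vf U X" "z \<in> U"
  shows "dyn_nablaT \<rho> N J X z = vproj N z (lie \<rho> (app J X) z) - J z (lie \<rho> (app (hproj N) X) z)"
  unfolding dyn_nablaT_def using dyn_nabla_J[OF assms] J_dyn_nabla[OF assms(2)] by simp

lemma dyn_nablaT_J_eq_lieT: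
  assumes "vf U X" "z \<in> U"
  shows "dyn_nablaT \<rho> N J X z = lieT \<rho> J X z + hproj N z (X z) - vproj N z (X z)"
proof -
  define L where "L = lie \<rho> (app J X) z"
  have "vproj N z L = L + hproj N z (X z)"
    using hproj_plus_vproj[of N z L] hproj_lie_J[OF assms] unfolding L_def
    by (simp add: algebra_simps)
  moreover have "J z (lie \<rho> X z) = J z (lie \<rho> (app (hproj N) X) z) - vproj N z (X z)"
    using lie_hproj_plus_lie_vproj[OF assms] J_lie_vproj[OF assms]
    by (simp add: linear_add[OF adapted_atsD(1)[OF J assms(2)]])
  ultimately show ?thesis
    unfolding dyn_nablaT_J[OF assms] lieT_def L_def[symmetric] by (simp add: algebra_simps)
qed

lemma snd_lie_J_coords:
  assumes "vf U X" "z \<in> U"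
  shows "snd (lie \<rho> (app J X) z) $ j =
      (\<Sum>i\<in>UNIV. vf_apply \<rho> (\<lambda>y. fst (X y) $ i) z * tcoef J z i j
                  + fst (X z) $ i * vf_apply \<rho> (\<lambda>y. tcoef J y i j) z)
      - (\<Sum>k\<in>UNIV. (\<Sum>i\<in>UNIV. fst (X z) $ i * tcoef J z i k) * partial_p (\<lambda>y. snd (\<rho> y) $ j) z k)"
proof -
  have fst_X_diff: "\<And>i. (\<lambda>y. fst (X y) $ i) differentiable at z"
    by (rule vf_fst_differentiable_at[OF U assms])
  have tcoef_diff: "\<And>i. (\<lambda>y. tcoef J y i j) differentiable at z"
    by (rule tcoef_differentiable_at[OF U J assms(2)])
  have "snd (frechet_derivative (app J X) (at z) (\<rho> z)) $ j
      = vf_apply \<rho> (\<lambda>y. snd (app J X y) $ j) z"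
    by (rule frechet_derivative_snd_component[OF adapted_ats_vf_differentiable_at[OF U J assms], symmetric])
  also have "\<dots> = vf_apply \<rho> (\<lambda>y. \<Sum>i\<in>UNIV. fst (X y) $ i * tcoef J y i j) z"
    using fst_X_diff tcoef_diff
    by (subst frechet_derivative_transform_within_open[OF _ U assms(2)])
      (simp_all add: adapted_ats_vf_coords[OF J])
  also have "\<dots> = (\<Sum>i\<in>UNIV. vf_apply \<rho> (\<lambda>y. fst (X y) $ i) z * tcoef J z i j
                  + fst (X z) $ i * vf_apply \<rho> (\<lambda>y. tcoef J y i j) z)"
    by (rule frechet_derivative_sum_mult[OF fst_X_diff tcoef_diff])
  finally have "snd (frechet_derivative (app J X) (at z) (\<rho> z)) $ j = \<dots>" .
  moreover have "snd (frechet_derivative \<rho> (at z) (app J X z)) $ j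
      = (\<Sum>k\<in>UNIV. (\<Sum>i\<in>UNIV. fst (X z) $ i * tcoef J z i k) * partial_p (\<lambda>y. snd (\<rho> y) $ j) z k)"
    unfolding adapted_ats_vf_coords[OF J assms(2)]
    by (simp add: frechet_derivative_pair_components(2)[OF vf_differentiable_at[OF U \<rho> assms(2)]])
  ultimately show ?thesis
    by (simp add: lie_def)
qed

lemma snd_J_lie_hproj_coords:
  assumes "vf U X" "z \<in> U"
  shows "snd (J z (lie \<rho> (app (hproj N) X) z)) $ j =
      (\<Sum>i\<in>UNIV. (vf_apply \<rho> (\<lambda>y. fst (X y) $ i) z
                  - (\<Sum>l\<in>UNIV. fst (X z) $ l * partial_x (\<lambda>y. fst (\<rho> y) $ i) z l)) * tcoef J z i j)
      - (\<Sum>i\<in>UNIV. N z $ i $ j * fst (X z) $ i)"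
proof -
  define a where "a = fst (X z)"
  define n :: "real^'n" where "n = (\<chi> j. \<Sum>i\<in>UNIV. N z $ i $ j * a $ i)"
  define d where "d = fst (frechet_derivative \<rho> (at z) (0, n))"
  define u where "u = (\<chi> i. vf_apply \<rho> (\<lambda>y. fst (X y) $ i) z
                          - (\<Sum>l\<in>UNIV. a $ l * partial_x (\<lambda>y. fst (\<rho> y) $ i) z l))"
  have \<rho>_diff: "\<rho> differentiable at z"
    by (rule vf_differentiable_at[OF U \<rho> assms(2)])
  have "fst (frechet_derivative (app (hproj N) X) (at z) (\<rho> z)) $ i = vf_apply \<rho> (\<lambda>y. fst (X y) $ i) z" for i
    using frechet_derivative_fst_component[OF hproj_vf_differentiable_at[OF U N assms], of i]
    by (simp add: app_def hproj_def)
  moreover have "app (hproj N) X z = (a, n)"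
    by (simp add: app_def hproj_def a_def n_def)
  ultimately have "fst (lie \<rho> (app (hproj N) X) z) = u - d"
    by (simp add: lie_def vec_eq_iff u_def d_def frechet_derivative_pair_components(1)[OF \<rho>_diff])
  then have "snd (J z (lie \<rho> (app (hproj N) X) z)) $ j
      = (\<Sum>i\<in>UNIV. u $ i * tcoef J z i j) - (\<Sum>i\<in>UNIV. d $ i * tcoef J z i j)"
    by (simp add: adapted_ats_coords[OF J assms(2)] left_diff_distrib sum_subtractf)
  moreover have "(\<Sum>i\<in>UNIV. d $ i * tcoef J z i j) = n $ j"
    using arg_cong[OF J_regular_J_deriv_vertical[OF U J regular assms(2), of n], of "\<lambda>w. snd w $ j"]
    by (simp add: adapted_ats_coords[OF J assms(2)] d_def)
  ultimately show ?thesis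
    by (simp add: u_def n_def a_def)
qed

lemma dyn_nablaT_J_coords:
  assumes "vf U X" "z \<in> U"
  shows "dyn_nablaT \<rho> N J X z =
      (0, \<chi> j. \<Sum>i\<in>UNIV.
         (vf_apply \<rho> (\<lambda>y. tcoef J y i j) z
          + (\<Sum>k\<in>UNIV. tcoef J z k j * partial_x (\<lambda>y. fst (\<rho> y) $ k) z i)
          - (\<Sum>k\<in>UNIV. tcoef J z i k * partial_p (\<lambda>y. snd (\<rho> y) $ j) z k)
          + 2 * N z $ i $ j) * fst (X z) $ i)"
proof -
  define L where "L = lie \<rho> (app J X) z"
  define H where "H = lie \<rho> (app (hproj N) X) z"
  have "fst (dyn_nablaT \<rho> N J X z) = 0"
    by (simp add: dyn_nablaT_J[OF assms] vproj_def adapted_ats_fst[OF J assms(2)])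
  moreover have "snd (dyn_nablaT \<rho> N J X z) $ j = (\<Sum>i\<in>UNIV.
         (vf_apply \<rho> (\<lambda>y. tcoef J y i j) z
          + (\<Sum>k\<in>UNIV. tcoef J z k j * partial_x (\<lambda>y. fst (\<rho> y) $ k) z i)
          - (\<Sum>k\<in>UNIV. tcoef J z i k * partial_p (\<lambda>y. snd (\<rho> y) $ j) z k)
          + 2 * N z $ i $ j) * fst (X z) $ i)" for j
  proof -
    have "snd (dyn_nablaT \<rho> N J X z) $ j
        = snd L $ j + (\<Sum>i\<in>UNIV. N z $ i $ j * fst (X z) $ i) - snd (J z H) $ j"
      using J_regular_fst_lie[OF J regular assms]
      by (simp add: dyn_nablaT_J[OF assms] vproj_def sum_negf L_def H_def)
    also have "\<dots> = (\<Sum>i\<in>UNIV. vf_apply \<rho> (\<lambda>y. fst (X y) $ i) z * tcoef J z i j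
                  + fst (X z) $ i * vf_apply \<rho> (\<lambda>y. tcoef J y i j) z)
        - (\<Sum>k\<in>UNIV. (\<Sum>i\<in>UNIV. fst (X z) $ i * tcoef J z i k) * partial_p (\<lambda>y. snd (\<rho> y) $ j) z k)
        + (\<Sum>i\<in>UNIV. N z $ i $ j * fst (X z) $ i)
        - ((\<Sum>i\<in>UNIV. (vf_apply \<rho> (\<lambda>y. fst (X y) $ i) z
                  - (\<Sum>l\<in>UNIV. fst (X z) $ l * partial_x (\<lambda>y. fst (\<rho> y) $ i) z l)) * tcoef J z i j)
           - (\<Sum>i\<in>UNIV. N z $ i $ j * fst (X z) $ i))"
      unfolding L_def H_def snd_lie_J_coords[OF assms] snd_J_lie_hproj_coords[OF assms] ..
    also have "\<dots> = (\<Sum>i\<in>UNIV.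
         (vf_apply \<rho> (\<lambda>y. tcoef J y i j) z
          + (\<Sum>k\<in>UNIV. tcoef J z k j * partial_x (\<lambda>y. fst (\<rho> y) $ k) z i)
          - (\<Sum>k\<in>UNIV. tcoef J z i k * partial_p (\<lambda>y. snd (\<rho> y) $ j) z k)
          + 2 * N z $ i $ j) * fst (X z) $ i)"
      by (rule sum_regroup_dyn_covariant_coords)
    finally show ?thesis .
  qed
  ultimately show ?thesis
    by (simp add: prod_eq_iff vec_eq_iff)
qed

end

theorem mainTheorem2:
  fixes U :: "('n::finite) pt set"
    and J :: "'n pt \<Rightarrow> 'n pt \<Rightarrow> 'n pt"
    and \<rho> :: "'n pt \<Rightarrow> 'n pt"
    and N :: "'n pt \<Rightarrow> real^'n^'n"
  assumes "open U" and "U \<subseteq> {z. snd z \<noteq> 0}"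
    and "adapted_ats U J"
    and "vf U \<rho>" and "J_regular U J \<rho>"
    and "nonlin_conn U N"
  shows "(\<forall>X. vf U X \<longrightarrow> (\<forall>z\<in>U. hproj N z (lie \<rho> (app J X) z) = - hproj N z (X z)))
       \<and> (\<forall>X. vf U X \<longrightarrow> (\<forall>z\<in>U. J z (lie \<rho> (app (vproj N) X) z) = - vproj N z (X z)))
       \<and> (\<forall>X. vf U X \<longrightarrow> (\<forall>z\<in>U.
             dyn_nablaT \<rho> N J X z = lieT \<rho> J X z + hproj N z (X z) - vproj N z (X z)))
       \<and> (\<forall>X. vf U X \<longrightarrow> (\<forall>z\<in>U.
             dyn_nablaT \<rho> N J X z =
               (0, \<chi> j. \<Sum>i\<in>UNIV.
                  (frechet_derivative (\<lambda>y. tcoef J y i j) (at z) (\<rho> z)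
                   + (\<Sum>k\<in>UNIV. tcoef J z k j *
                        frechet_derivative (\<lambda>y. fst (\<rho> y) $ k) (at z) (axis i 1, 0))
                   - (\<Sum>k\<in>UNIV. tcoef J z i k *
                        frechet_derivative (\<lambda>y. snd (\<rho> y) $ j) (at z) (0, axis k 1))
                   + 2 * N z $ i $ j) * fst (X z) $ i)))"
  using hproj_lie_J[OF assms(1,3-6)] J_lie_vproj[OF assms(1,3-6)]
    dyn_nablaT_J_eq_lieT[OF assms(1,3-6)] dyn_nablaT_J_coords[OF assms(1,3-6)]
  by blast

end
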